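(* Let $B$ be a Noetherian ring, $\varphi\in B^{m\times n}$ with $m\le n$, $1\le t\le m$, and $S=B/I_t(\varphi)$. Let $\varphi'\in B^{m\times(t-1)}$ be the submatrix of the first $t-1$ columns, $\varphi''\in B^{(t-1)\times n}$ the submatrix of the first $t-1$ rows, and $\Delta=\det(\delta)$ where $\delta\in B^{(t-1)\times(t-1)}$ is the upper-left $(t-1)\times(t-1)$ submatrix of $\varphi$. Then $I_{t-1}(\varphi')\cdot I_{t-1}(\varphi'')S\subset\Delta S$.
   Context: $I_k(\psi)$ denotes the ideal generated by the $k\times k$ minors of a matrix $\psi$ (with $I_0=B$). *)

theory Defs
  imports "HOL-Combinatorics.Permutations"
begin

text \<open>Matrices over a commutative ring are functions nat => nat => 'a; an m x n matrix
  uses the entries with row index < m and column index < n (0-based).\<close>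

definition ideal_gen :: "'a::comm_ring_1 set \<Rightarrow> 'a set" where
  "ideal_gen X = {y. \<exists>F c. finite F \<and> F \<subseteq> X \<and> y = (\<Sum>x\<in>F. c x * x)}"

definition is_ideal :: "'a::comm_ring_1 set \<Rightarrow> bool" where
  "is_ideal I \<longleftrightarrow> 0 \<in> I \<and> (\<forall>x\<in>I. \<forall>y\<in>I. x + y \<in> I) \<and> (\<forall>r. \<forall>x\<in>I. r * x \<in> I)"

definition noetherian_ring :: "'a::comm_ring_1 itself \<Rightarrow> bool" where
  "noetherian_ring _ \<longleftrightarrow>
     (\<forall>I::'a set. is_ideal I \<longrightarrow> (\<exists>F. finite F \<and> I = ideal_gen F))"

definition det_nat :: "nat \<Rightarrow> (nat \<Rightarrow> nat \<Rightarrow> 'a::comm_ring_1) \<Rightarrow> 'a" where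
  "det_nat k M = (\<Sum>p | p permutes {..<k}. of_int (sign p) * (\<Prod>i<k. M i (p i)))"

definition minor :: "(nat \<Rightarrow> nat \<Rightarrow> 'a::comm_ring_1) \<Rightarrow> nat set \<Rightarrow> nat set \<Rightarrow> 'a" where
  "minor M R C = det_nat (card R)
     (\<lambda>i j. M (sorted_list_of_set R ! i) (sorted_list_of_set C ! j))"

text \<open>I_k of an m x n matrix: ideal generated by all k x k minors (I_0 = whole ring).\<close>
definition minors_ideal :: "nat \<Rightarrow> nat \<Rightarrow> nat \<Rightarrow> (nat \<Rightarrow> nat \<Rightarrow> 'a::comm_ring_1) \<Rightarrow> 'a set" where
  "minors_ideal k m n M = ideal_gen {minor M R C | R C.
      R \<subseteq> {..<m} \<and> C \<subseteq> {..<n} \<and> card R = k \<and> card C = k}"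

end

(* Write k = t - 1, [k] = {0..<k}, and let R, C be k-element sets of rows and columns. The
   2k x 2k matrix
     [ phi([k], C)   delta       ]
     [ 0             phi(R, [k]) ]
   has determinant minor(phi; [k], C) * minor(phi; R, [k]). Write each of its last k rows
   (0, phi(r, [k])) as the full row (phi(r, C), phi(r, [k])) of phi minus (phi(r, C), 0) and expand
   the determinant multilinearly. A summand containing a full row has k + 1 rows that are rows of
   phi, so Laplace expansion along the remaining rows puts it into I_(k+1)(phi). The only other
   summand has a zero lower-right block, so its determinant is +-Delta * det(-phi(R, C)). *)

theory Submission
  imports Defs "Jordan_Normal_Form.Determinant"
begin

lemma ideal_gen_zero: "0 \<in> ideal_gen X"
  unfolding ideal_gen_def by (auto intro: exI[of _ "{}"])

lemma ideal_gen_generator: "x \<in> X \<Longrightarrow> x \<in> ideal_gen X"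
  unfolding ideal_gen_def by (auto intro!: exI[of _ "{x}"] exI[of _ "\<lambda>_. 1"])

lemma ideal_gen_mult_left:
  assumes "a \<in> ideal_gen X"
  shows "r * a \<in> ideal_gen X"
proof -
  obtain F c where "finite F" "F \<subseteq> X" "a = (\<Sum>x\<in>F. c x * x)"
    using assms unfolding ideal_gen_def by auto
  then show ?thesis
    unfolding ideal_gen_def
    by (auto intro!: exI[of _ F] exI[of _ "\<lambda>x. r * c x"] simp: sum_distrib_left mult.assoc)
qed

lemma ideal_gen_add:
  assumes "a \<in> ideal_gen X" and "b \<in> ideal_gen X"
  shows "a + b \<in> ideal_gen X"
proof -
  obtain F c where F: "finite F" "F \<subseteq> X" "a = (\<Sum>x\<in>F. c x * x)"
    using assms(1) unfolding ideal_gen_def by auto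
  obtain G d where G: "finite G" "G \<subseteq> X" "b = (\<Sum>x\<in>G. d x * x)"
    using assms(2) unfolding ideal_gen_def by auto
  define e where "e x = (if x \<in> F then c x else 0) + (if x \<in> G then d x else 0)" for x
  have "a = (\<Sum>x\<in>F \<union> G. (if x \<in> F then c x else 0) * x)"
    unfolding F(3) using F(1) G(1) by (intro sum.mono_neutral_cong_left) auto
  moreover have "b = (\<Sum>x\<in>F \<union> G. (if x \<in> G then d x else 0) * x)"
    unfolding G(3) using F(1) G(1) by (intro sum.mono_neutral_cong_left) auto
  ultimately have "a + b = (\<Sum>x\<in>F \<union> G. e x * x)"
    by (simp add: e_def distrib_right sum.distrib)
  then show ?thesis
    unfolding ideal_gen_def using F G by blast
qed

lemma ideal_gen_sum:
  "finite S \<Longrightarrow> (\<And>i. i \<in> S \<Longrightarrow> f i \<in> ideal_gen X) \<Longrightarrow> sum f S \<in> ideal_gen X"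
  by (induction S rule: finite_induct) (auto intro: ideal_gen_zero ideal_gen_add)

lemma ideal_gen_subset: "X \<subseteq> ideal_gen Y \<Longrightarrow> ideal_gen X \<subseteq> ideal_gen Y"
  by (auto simp: ideal_gen_def [of X] intro!: ideal_gen_sum ideal_gen_mult_left)

lemma ideal_gen_mult:
  assumes "a \<in> ideal_gen X" and "b \<in> ideal_gen Y"
    and "\<And>x y. x \<in> X \<Longrightarrow> y \<in> Y \<Longrightarrow> x * y \<in> ideal_gen Z"
  shows "a * b \<in> ideal_gen Z"
proof -
  obtain F c where F: "finite F" "F \<subseteq> X" "a = (\<Sum>x\<in>F. c x * x)"
    using assms(1) unfolding ideal_gen_def by auto
  obtain G d where G: "finite G" "G \<subseteq> Y" "b = (\<Sum>y\<in>G. d y * y)"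
    using assms(2) unfolding ideal_gen_def by auto
  have "a * b = (\<Sum>x\<in>F. \<Sum>y\<in>G. (c x * d y) * (x * y))"
    unfolding F(3) G(3) sum_product by (simp add: ac_simps)
  also have "\<dots> \<in> ideal_gen Z"
    using F G assms(3) by (blast intro: ideal_gen_sum ideal_gen_mult_left)
  finally show ?thesis .
qed

lemma det_nat_eq_det: "det_nat k M = det (mat k k (\<lambda>(i, j). M i j))"
  unfolding det_nat_def det_def by (simp add: atLeast0LessThan)

lemma sum_lessThan_add:
  fixes k n :: nat
  shows "(\<Sum>j<k + n. f j) = (\<Sum>j<k. f j) + (\<Sum>j<n. f (k + j))"
  by (induction n) (auto simp: add.assoc)

lemma det_block_upper_triangular:
  fixes N :: "'a::comm_ring_1 mat"
  assumes "N \<in> carrier_mat (k + q) (k + q)"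
    and "\<And>i j. i < q \<Longrightarrow> j < k \<Longrightarrow> N $$ (k + i, j) = 0"
  shows "det N = det (mat k k (\<lambda>(i, j). N $$ (i, j))) * det (mat q q (\<lambda>(i, j). N $$ (k + i, k + j)))"
  using assms
proof (induction q arbitrary: N)
  case 0
  then have "mat k k (\<lambda>(i, j). N $$ (i, j)) = N"
    by (intro eq_matI) auto
  then show ?case by simp
next
  case (Suc q)
  let ?UL = "\<lambda>N. mat k k (\<lambda>(i, j). N $$ (i, j))"
  let ?LR = "\<lambda>q N. mat q q (\<lambda>(i, j). N $$ (k + i, k + j))"
  have N: "N \<in> carrier_mat (Suc (k + q)) (Suc (k + q))"
    using Suc.prems(1) by simp
  have LR: "?LR (Suc q) N \<in> carrier_mat (Suc q) (Suc q)"
    by simp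
  have expansion_term: "N $$ (k + q, k + c) * cofactor N (k + q) (k + c)
      = det (?UL N) * (?LR (Suc q) N $$ (q, c) * cofactor (?LR (Suc q) N) q c)"
    if c: "c < Suc q" for c
  proof -
    let ?D = "mat_delete N (k + q) (k + c)"
    have "det ?D = det (?UL ?D) * det (?LR q ?D)"
      by (rule Suc.IH) (use Suc.prems(2) N in \<open>auto simp: mat_delete_def\<close>)
    moreover have "?UL ?D = ?UL N"
      using N by (intro eq_matI) (auto simp: mat_delete_def)
    moreover have "?LR q ?D = mat_delete (?LR (Suc q) N) q c"
      using N c by (intro eq_matI) (auto simp: mat_delete_def)
    moreover have "(-1::'a) ^ (k + q + (k + c)) = (-1) ^ (q + c)"
      by (metis (no_types) add.assoc add.commute mult_2 power_add power_minus1_even mult_1)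
    ultimately show ?thesis
      using c by (simp add: cofactor_def)
  qed
  have "det N = (\<Sum>j<k + Suc q. N $$ (k + q, j) * cofactor N (k + q) j)"
    using laplace_expansion_row [OF N, of "k + q"] by simp
  also have "\<dots> = (\<Sum>c<Suc q. N $$ (k + q, k + c) * cofactor N (k + q) (k + c))"
    using Suc.prems(2) by (simp add: sum_lessThan_add)
  also have "\<dots> = det (?UL N) * det (?LR (Suc q) N)"
    using laplace_expansion_row [OF LR, of q] by (simp add: expansion_term sum_distrib_left del: sum.lessThan_Suc)
  finally show ?case .
qed

lemma det_block_anti_triangular:
  fixes N :: "'a::comm_ring_1 mat"
  assumes N: "N \<in> carrier_mat (k + q) (k + q)"
    and zero: "\<And>i j. i < q \<Longrightarrow> j < k \<Longrightarrow> N $$ (k + i, q + j) = 0"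
  shows "det N = (-1) ^ (k * q) * det (mat k k (\<lambda>(i, j). N $$ (i, q + j)))
                   * det (mat q q (\<lambda>(i, j). N $$ (k + i, j)))"
proof -
  define B where "B = mat (k + q) (k + q) (\<lambda>(i, j). N $$ (i, if j < k then j + q else j - k))"
  have "det B = det (mat k k (\<lambda>(i, j). B $$ (i, j))) * det (mat q q (\<lambda>(i, j). B $$ (k + i, k + j)))"
  proof (rule det_block_upper_triangular)
    fix i j assume "i < q" "j < k"
    then show "B $$ (k + i, j) = 0"
      using zero [of i j] by (simp add: B_def add.commute)
  qed (simp add: B_def)
  moreover have "mat k k (\<lambda>(i, j). B $$ (i, j)) = mat k k (\<lambda>(i, j). N $$ (i, q + j))"
    by (intro eq_matI) (auto simp: B_def add.commute)
  moreover have "mat q q (\<lambda>(i, j). B $$ (k + i, k + j)) = mat q q (\<lambda>(i, j). N $$ (k + i, j))"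
    by (intro eq_matI) (auto simp: B_def)
  moreover have "det N = (-1) ^ (k * q) * det B"
    unfolding B_def by (rule det_swap_cols [OF N])
  ultimately show ?thesis
    by (simp add: mult.assoc)
qed

lemma det_permute_rows_cols:
  assumes p: "p permutes {..<n}" and q: "q permutes {..<n}"
  shows "det (mat n n (\<lambda>(i, j). M (p i) (q j))) = signof p * signof q * det (mat n n (\<lambda>(i, j). M i j))"
proof -
  define A where "A = mat n n (\<lambda>(i, j). M i (q j))"
  define B where "B = mat n n (\<lambda>(i, j). M j i)"
  have p_lt: "p i < n" and q_lt: "q i < n" if "i < n" for i
    using that permutes_in_image [OF p] permutes_in_image [OF q] by auto
  have A: "A \<in> carrier_mat n n" and B: "B \<in> carrier_mat n n"
    by (simp_all add: A_def B_def)
  have "transpose_mat B = mat n n (\<lambda>(i, j). M i j)"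
    by (intro eq_matI) (auto simp: B_def)
  then have det_B: "det B = det (mat n n (\<lambda>(i, j). M i j))"
    using det_transpose [OF B] by simp
  have "transpose_mat A = mat n n (\<lambda>(i, j). B $$ (q i, j))"
    by (intro eq_matI) (auto simp: A_def B_def q_lt)
  then have det_A: "det A = signof q * det B"
    using det_transpose [OF A] det_permute_rows [OF B] q by (simp add: atLeast0LessThan)
  have "mat n n (\<lambda>(i, j). M (p i) (q j)) = mat n n (\<lambda>(i, j). A $$ (p i, j))"
    by (intro eq_matI) (auto simp: A_def p_lt)
  then show ?thesis
    using det_permute_rows [OF A] p det_A det_B by (simp add: atLeast0LessThan mult.assoc)
qed

lemma minor_eq_det:
  "minor M R C = det (mat (card R) (card R)
     (\<lambda>(i, j). M (sorted_list_of_set R ! i) (sorted_list_of_set C ! j)))"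
  by (simp add: minor_def det_nat_eq_det)

lemma obtain_permutes_sorted_list_of_image:
  assumes inj: "inj_on \<rho> {..<t}"
  obtains p where "p permutes {..<t}"
    and "\<And>i. i < t \<Longrightarrow> \<rho> i = sorted_list_of_set (\<rho> ` {..<t}) ! p i"
proof -
  define xs where "xs = sorted_list_of_set (\<rho> ` {..<t})"
  have "length xs = t"
    using inj by (simp add: xs_def card_image)
  then have nth: "bij_betw ((!) xs) {..<t} (\<rho> ` {..<t})"
    by (intro bij_betw_nth) (auto simp: xs_def)
  define p where "p i = (if i < t then the_inv_into {..<t} ((!) xs) (\<rho> i) else i)" for i
  have "bij_betw (the_inv_into {..<t} ((!) xs) \<circ> \<rho>) {..<t} {..<t}"
    using inj nth by (intro bij_betw_trans bij_betw_the_inv_into) (auto simp: bij_betw_def)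
  then have "bij_betw p {..<t} {..<t}"
    by (rule bij_betw_cong [THEN iffD1, rotated]) (simp add: p_def)
  then have "p permutes {..<t}"
    by (rule bij_imp_permutes) (simp add: p_def)
  moreover have "\<rho> i = xs ! p i" if "i < t" for i
    using that nth by (simp add: p_def f_the_inv_into_f_bij_betw)
  ultimately show ?thesis
    using that unfolding xs_def by blast
qed

lemma det_index_maps_in_minors_ideal:
  fixes \<phi> :: "nat \<Rightarrow> nat \<Rightarrow> 'a::comm_ring_1"
  assumes "\<And>i. i < t \<Longrightarrow> \<rho> i < m" and "\<And>j. j < t \<Longrightarrow> \<gamma> j < n"
  shows "det (mat t t (\<lambda>(i, j). \<phi> (\<rho> i) (\<gamma> j))) \<in> minors_ideal t m n \<phi>"
proof (cases "inj_on \<rho> {..<t} \<and> inj_on \<gamma> {..<t}")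
  case False
  then have "det (mat t t (\<lambda>(i, j). \<phi> (\<rho> i) (\<gamma> j))) = 0"
  proof (elim disjE [OF de_Morgan_conj [THEN iffD1]])
    assume "\<not> inj_on \<rho> {..<t}"
    then obtain i i' where "i < t" "i' < t" "i \<noteq> i'" "\<rho> i = \<rho> i'"
      unfolding inj_on_def by auto
    then show ?thesis
      by (intro det_identical_rows [of _ t i i']) auto
  next
    assume "\<not> inj_on \<gamma> {..<t}"
    then obtain j j' where "j < t" "j' < t" "j \<noteq> j'" "\<gamma> j = \<gamma> j'"
      unfolding inj_on_def by auto
    then show ?thesis
      by (intro det_identical_columns [of _ t j j']) auto
  qed
  then show ?thesis
    by (simp add: minors_ideal_def ideal_gen_zero)
next
  case True
  define R where "R = \<rho> ` {..<t}"
  define C where "C = \<gamma> ` {..<t}"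
  obtain p where p: "p permutes {..<t}" "\<And>i. i < t \<Longrightarrow> \<rho> i = sorted_list_of_set R ! p i"
    using obtain_permutes_sorted_list_of_image True unfolding R_def by blast
  obtain q where q: "q permutes {..<t}" "\<And>i. i < t \<Longrightarrow> \<gamma> i = sorted_list_of_set C ! q i"
    using obtain_permutes_sorted_list_of_image True unfolding C_def by blast
  have card: "card R = t" "card C = t"
    using True by (simp_all add: R_def C_def card_image)
  have "mat t t (\<lambda>(i, j). \<phi> (\<rho> i) (\<gamma> j))
      = mat t t (\<lambda>(i, j). \<phi> (sorted_list_of_set R ! p i) (sorted_list_of_set C ! q j))"
    by (intro eq_matI) (simp_all add: p q)
  then have "det (mat t t (\<lambda>(i, j). \<phi> (\<rho> i) (\<gamma> j))) = signof p * signof q * minor \<phi> R C"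
    using det_permute_rows_cols [OF p(1) q(1),
        of "\<lambda>i j. \<phi> (sorted_list_of_set R ! i) (sorted_list_of_set C ! j)"]
    by (simp add: minor_eq_det card)
  moreover have "minor \<phi> R C \<in> minors_ideal t m n \<phi>"
    unfolding minors_ideal_def using assms card
    by (intro ideal_gen_generator) (auto simp: R_def C_def)
  ultimately show ?thesis
    by (simp add: minors_ideal_def ideal_gen_mult_left)
qed

lemma det_in_ideal_gen_by_row_expansion:
  fixes N :: "'a::comm_ring_1 mat"
  assumes "N \<in> carrier_mat (Suc s) (Suc s)" and "i < Suc s"
    and "\<And>j. j < Suc s \<Longrightarrow> det (mat_delete N i j) \<in> ideal_gen X"
  shows "det N \<in> ideal_gen X"
proof -
  have "det N = (\<Sum>j<Suc s. N $$ (i, j) * ((-1) ^ (i + j) * det (mat_delete N i j)))"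
    using laplace_expansion_row [OF assms(1,2)] by (simp add: cofactor_def)
  also have "\<dots> \<in> ideal_gen X"
    using assms(3) by (intro ideal_gen_sum ideal_gen_mult_left) auto
  finally show ?thesis .
qed

lemma obtain_index_card_Diff_ge:
  assumes "G \<subseteq> {..<Suc s}" and "t \<le> card G" and "t \<le> s"
  obtains i where "i < Suc s" and "t \<le> card (G - {i})"
proof (cases "G = {..<Suc s}")
  case True
  then show ?thesis
    using that [of s] assms(3) by simp
next
  case False
  then obtain i where "i < Suc s" "i \<notin> G"
    using assms(1) by auto
  then show ?thesis
    using that assms(2) by simp
qed

lemma det_in_minors_ideal_of_rows:
  fixes \<phi> :: "nat \<Rightarrow> nat \<Rightarrow> 'a::comm_ring_1" and N :: "'a mat"
  assumes "N \<in> carrier_mat s s" and "G \<subseteq> {..<s}" and "t \<le> card G"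
    and "\<And>i j. i \<in> G \<Longrightarrow> j < s \<Longrightarrow> N $$ (i, j) = \<phi> (\<rho> i) (\<gamma> j)"
    and "\<And>i. i \<in> G \<Longrightarrow> \<rho> i < m" and "\<And>j. j < s \<Longrightarrow> \<gamma> j < n"
  shows "det N \<in> minors_ideal t m n \<phi>"
  using assms
proof (induction s arbitrary: N G \<rho> \<gamma>)
  case 0
  then have "t = 0" and "det N = det (mat 0 0 (\<lambda>(i, j). \<phi> (\<rho> i) (\<gamma> j)))"
    by auto
  then show ?case
    using det_index_maps_in_minors_ideal [of 0] by simp
next
  case (Suc s)
  have N: "N \<in> carrier_mat (Suc s) (Suc s)"
    using Suc.prems(1) .
  have card_G: "card G \<le> Suc s"
    using Suc.prems(2) by (metis card_lessThan card_mono finite_lessThan)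
  show ?case
  proof (cases "t = Suc s")
    case True
    then have "G = {..<Suc s}"
      using card_G Suc.prems(2,3) by (simp add: card_subset_eq)
    then have "N = mat t t (\<lambda>(i, j). \<phi> (\<rho> i) (\<gamma> j))"
      using True Suc.prems(1,4) by (intro eq_matI) auto
    then show ?thesis
      using det_index_maps_in_minors_ideal [of t \<rho> m \<gamma> n \<phi>] Suc.prems(5,6) \<open>G = {..<Suc s}\<close> True
      by simp
  next
    case False
    then obtain i0 where i0: "i0 < Suc s" and "t \<le> card (G - {i0})"
      using obtain_index_card_Diff_ge [OF Suc.prems(2,3)] card_G Suc.prems(3) by auto
    define G' where "G' = delete_index i0 ` (G - {i0})"
    have G': "G' \<subseteq> {..<s}"
      using Suc.prems(2) i0 by (auto simp: G'_def delete_index_def)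
    have insert_delete: "insert_index i0 i \<in> G" if "i \<in> G'" for i
      using that insert_delete_index unfolding G'_def by fastforce
    have "card G' = card (G - {i0})"
      unfolding G'_def by (intro card_image delete_index_inj_on) simp
    with \<open>t \<le> card (G - {i0})\<close> have "t \<le> card G'"
      by simp
    show ?thesis
      unfolding minors_ideal_def
    proof (rule det_in_ideal_gen_by_row_expansion [OF N i0], fold minors_ideal_def)
      fix j assume j: "j < Suc s"
      show "det (mat_delete N i0 j) \<in> minors_ideal t m n \<phi>"
      proof (rule Suc.IH [OF _ G' \<open>t \<le> card G'\<close>, of _ "\<rho> \<circ> insert_index i0" "\<gamma> \<circ> insert_index j"])
        fix i j' assume i: "i \<in> G'" and j': "j' < s"
        then have "mat_delete N i0 j $$ (i, j') = N $$ (insert_index i0 i, insert_index j j')"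
          using mat_delete_index [OF N i0 j] G' by auto
        also have "\<dots> = \<phi> ((\<rho> \<circ> insert_index i0) i) ((\<gamma> \<circ> insert_index j) j')"
          using Suc.prems(4) insert_delete [OF i] j' by (simp add: insert_index_def)
        finally show "mat_delete N i0 j $$ (i, j') = \<phi> ((\<rho> \<circ> insert_index i0) i) ((\<gamma> \<circ> insert_index j) j')" .
      qed (use mat_delete_carrier [OF N] Suc.prems(5,6) insert_delete in \<open>auto simp: insert_index_def\<close>)
    qed
  qed
qed

lemma det_in_delta_plus_minors_ideal:
  fixes \<phi> :: "nat \<Rightarrow> nat \<Rightarrow> 'a::comm_ring_1" and N :: "'a mat"
  assumes N: "N \<in> carrier_mat (k + k) (k + k)" and "k < m"
    and top: "\<And>i j. i < k \<Longrightarrow> j < k + k \<Longrightarrow> N $$ (i, j) = \<phi> i (\<gamma> j)"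
    and \<gamma>: "\<And>j. j < k + k \<Longrightarrow> \<gamma> j < n" "\<And>j. j < k \<Longrightarrow> \<gamma> (k + j) = j"
    and \<rho>: "\<And>l. l < k \<Longrightarrow> \<rho> l < m"
    and bottom: "\<And>l. l < k \<Longrightarrow>
      (\<forall>j < k + k. N $$ (k + l, j) = \<phi> (\<rho> l) (\<gamma> j)) \<or> (\<forall>j < k. N $$ (k + l, k + j) = 0)"
  shows "det N \<in> ideal_gen (insert (det_nat k \<phi>) (minors_ideal (Suc k) m n \<phi>))"
proof (cases "\<exists>l < k. \<forall>j < k + k. N $$ (k + l, j) = \<phi> (\<rho> l) (\<gamma> j)")
  case True
  then obtain l where l: "l < k" "\<forall>j < k + k. N $$ (k + l, j) = \<phi> (\<rho> l) (\<gamma> j)"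
    by blast
  have "det N \<in> minors_ideal (Suc k) m n \<phi>"
  proof (rule det_in_minors_ideal_of_rows [OF N, of "insert (k + l) {..<k}"])
    show "\<And>i j. i \<in> insert (k + l) {..<k} \<Longrightarrow> j < k + k \<Longrightarrow>
        N $$ (i, j) = \<phi> (if i < k then i else \<rho> (i - k)) (\<gamma> j)"
      using top l by auto
  qed (use l \<open>k < m\<close> \<rho> \<gamma> in auto)
  then show ?thesis
    by (intro ideal_gen_generator) simp
next
  case False
  then have "N $$ (k + i, k + j) = 0" if "i < k" "j < k" for i j
    using bottom that by blast
  then have "det N = (-1) ^ (k * k) * det (mat k k (\<lambda>(i, j). N $$ (i, k + j)))
                       * det (mat k k (\<lambda>(i, j). N $$ (k + i, j)))"
    by (intro det_block_anti_triangular [OF N])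
  also have "mat k k (\<lambda>(i, j). N $$ (i, k + j)) = mat k k (\<lambda>(i, j). \<phi> i j)"
    using top \<gamma>(2) by (intro eq_matI) auto
  finally have "det N = ((-1) ^ (k * k) * det (mat k k (\<lambda>(i, j). N $$ (k + i, j)))) * det_nat k \<phi>"
    by (simp add: det_nat_eq_det ac_simps)
  then show ?thesis
    by (metis ideal_gen_generator ideal_gen_mult_left insertI1)
qed

lemma det_product_in_delta_plus_minors_ideal:
  fixes \<phi> :: "nat \<Rightarrow> nat \<Rightarrow> 'a::comm_ring_1"
  assumes "k < m" and "k \<le> n"
    and \<rho>: "\<And>l. l < k \<Longrightarrow> \<rho> l < m" and \<delta>: "\<And>j. j < k \<Longrightarrow> \<delta> j < n"
  shows "det (mat k k (\<lambda>(i, j). \<phi> (\<rho> i) j)) * det (mat k k (\<lambda>(i, j). \<phi> i (\<delta> j)))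
           \<in> ideal_gen (insert (det_nat k \<phi>) (minors_ideal (Suc k) m n \<phi>))"
proof -
  define \<gamma> where "\<gamma> j = (if j < k then \<delta> j else j - k)" for j
  \<comment> \<open>Row \<open>i \<ge> k\<close> of the block triangular matrix \<open>N0\<close> is \<open>bottom i 0 + bottom i 1\<close>: a full row
     of \<open>\<phi>\<close> plus a row vanishing on the last \<open>k\<close> columns. \<open>F\<close> indexes the summands of the
     multilinear expansion.\<close>
  define top where "top i = vec (k + k) (\<lambda>j. \<phi> i (\<gamma> j))" for i
  define bottom where
    "bottom i s = (if s = 0 then vec (k + k) (\<lambda>j. \<phi> (\<rho> (i - k)) (\<gamma> j))
                   else vec (k + k) (\<lambda>j. if j < k then - \<phi> (\<rho> (i - k)) (\<gamma> j) else 0))"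
    for i s :: nat
  define T where "T = {k..<k + k}"
  define F where "F = {f. (\<forall>i\<in>T. f i \<in> {0, 1::nat}) \<and> (\<forall>i. i \<notin> T \<longrightarrow> f i = i)}"
  define N where "N f = mat\<^sub>r (k + k) (k + k) (\<lambda>i. if i \<in> T then bottom i (f i) else top i)" for f
  define N0 where "N0 = mat\<^sub>r (k + k) (k + k)
    (\<lambda>i. if i \<in> T then finsum_vec TYPE('a) (k + k) (bottom i) {0, 1} else top i)"
  have N0: "N0 = mat (k + k) (k + k)
      (\<lambda>(i, j). if i < k then \<phi> i (\<gamma> j) else if j < k then 0 else \<phi> (\<rho> (i - k)) (j - k))"
    by (rule eq_matI) (auto simp: N0_def T_def top_def bottom_def index_finsum_vec \<gamma>_def)
  have "det (mat k k (\<lambda>(i, j). \<phi> (\<rho> i) j)) * det (mat k k (\<lambda>(i, j). \<phi> i (\<delta> j)))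
      = det (mat k k (\<lambda>(i, j). N0 $$ (i, j))) * det (mat k k (\<lambda>(i, j). N0 $$ (k + i, k + j)))"
  proof -
    have "mat k k (\<lambda>(i, j). N0 $$ (i, j)) = mat k k (\<lambda>(i, j). \<phi> i (\<delta> j))"
      by (intro eq_matI) (simp_all add: N0 \<gamma>_def)
    moreover have "mat k k (\<lambda>(i, j). N0 $$ (k + i, k + j)) = mat k k (\<lambda>(i, j). \<phi> (\<rho> i) j)"
      by (intro eq_matI) (simp_all add: N0)
    ultimately show ?thesis
      by (simp add: mult.commute)
  qed
  also have "\<dots> = det N0"
    by (rule det_block_upper_triangular [symmetric]) (simp_all add: N0)
  also have "\<dots> = (\<Sum>f\<in>F. det (N f))"
    unfolding N0_def N_def F_def
    by (rule det_linear_rows_finsum_lemma) (auto simp: T_def top_def bottom_def)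
  also have "\<dots> \<in> ideal_gen (insert (det_nat k \<phi>) (minors_ideal (Suc k) m n \<phi>))"
  proof (rule ideal_gen_sum)
    show "finite F"
      unfolding F_def by (rule finite_bounded_functions) (auto simp: T_def)
    fix f assume "f \<in> F"
    show "det (N f) \<in> ideal_gen (insert (det_nat k \<phi>) (minors_ideal (Suc k) m n \<phi>))"
    proof (rule det_in_delta_plus_minors_ideal [OF _ \<open>k < m\<close>, where \<gamma> = \<gamma> and \<rho> = \<rho>])
      show "\<And>l. l < k \<Longrightarrow> (\<forall>j < k + k. N f $$ (k + l, j) = \<phi> (\<rho> l) (\<gamma> j))
                             \<or> (\<forall>j < k. N f $$ (k + l, k + j) = 0)"
        using \<open>f \<in> F\<close> by (auto simp: N_def F_def T_def bottom_def)
    qed (use \<rho> \<delta> \<open>k \<le> n\<close> in \<open>auto simp: N_def T_def top_def \<gamma>_def\<close>)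
  qed
  finally show ?thesis .
qed

lemma nth_sorted_list_of_set_lessThan: "i < k \<Longrightarrow> sorted_list_of_set {..<k} ! i = i"
  by (simp flip: atLeast0LessThan)

lemma nth_sorted_list_of_set_mem: "finite A \<Longrightarrow> i < card A \<Longrightarrow> sorted_list_of_set A ! i \<in> A"
  by (metis length_sorted_list_of_set nth_mem set_sorted_list_of_set)

lemma subset_lessThan_card_eq_iff: "C \<subseteq> {..<k} \<and> card C = k \<longleftrightarrow> C = {..<k}"
  using card_subset_eq [of "{..<k}" C] by auto

lemma minors_ideal_first_columns:
  "minors_ideal k m k \<phi> = ideal_gen {minor \<phi> R {..<k} | R. R \<subseteq> {..<m} \<and> card R = k}"
  unfolding minors_ideal_def by (metis (no_types, lifting) subset_lessThan_card_eq_iff)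

lemma minors_ideal_first_rows:
  "minors_ideal k k n \<phi> = ideal_gen {minor \<phi> {..<k} C | C. C \<subseteq> {..<n} \<and> card C = k}"
  unfolding minors_ideal_def by (metis (no_types, lifting) subset_lessThan_card_eq_iff)

lemma minor_product_in_delta_plus_minors_ideal:
  fixes \<phi> :: "nat \<Rightarrow> nat \<Rightarrow> 'a::comm_ring_1"
  assumes "k < m" and "k \<le> n"
    and R: "R \<subseteq> {..<m}" "card R = k" and C: "C \<subseteq> {..<n}" "card C = k"
  shows "minor \<phi> R {..<k} * minor \<phi> {..<k} C
           \<in> ideal_gen (insert (det_nat k \<phi>) (minors_ideal (Suc k) m n \<phi>))"
proof -
  have "finite R" "finite C"
    using R C by (auto intro: finite_subset [OF _ finite_lessThan])
  then have R_lt: "sorted_list_of_set R ! l < m" and C_lt: "sorted_list_of_set C ! l < n"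
    if "l < k" for l
    using that R C nth_sorted_list_of_set_mem [of R l] nth_sorted_list_of_set_mem [of C l]
    by auto
  have "minor \<phi> R {..<k} = det (mat k k (\<lambda>(i, j). \<phi> (sorted_list_of_set R ! i) j))"
    unfolding minor_eq_det \<open>card R = k\<close>
    by (intro arg_cong [where f = det] eq_matI) (simp_all add: nth_sorted_list_of_set_lessThan)
  moreover have "minor \<phi> {..<k} C = det (mat k k (\<lambda>(i, j). \<phi> i (sorted_list_of_set C ! j)))"
    unfolding minor_eq_det card_lessThan
    by (intro arg_cong [where f = det] eq_matI) (simp_all add: nth_sorted_list_of_set_lessThan)
  ultimately show ?thesis
    using det_product_in_delta_plus_minors_ideal [OF \<open>k < m\<close> \<open>k \<le> n\<close> R_lt C_lt] by simp
qed

theorem lemma3p2: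
  fixes \<phi> :: "nat \<Rightarrow> nat \<Rightarrow> 'a::comm_ring_1" and m n t :: nat
  assumes "noetherian_ring TYPE('a)"
    and "m \<le> n" and "1 \<le> t" and "t \<le> m"
  shows "ideal_gen {a * b | a b. a \<in> minors_ideal (t - 1) m (t - 1) \<phi>
                               \<and> b \<in> minors_ideal (t - 1) (t - 1) n \<phi>}
         \<subseteq> ideal_gen (insert (det_nat (t - 1) \<phi>) (minors_ideal t m n \<phi>))"
proof -
  obtain k where t: "t = Suc k"
    using assms(3) by (cases t) auto
  then have "k < m" "k \<le> n"
    using assms(2,4) by auto
  have "a * b \<in> ideal_gen (insert (det_nat k \<phi>) (minors_ideal (Suc k) m n \<phi>))"
    if "a \<in> minors_ideal k m k \<phi>" and "b \<in> minors_ideal k k n \<phi>" for a b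
    using that unfolding minors_ideal_first_columns minors_ideal_first_rows
    by (rule ideal_gen_mult)
      (use \<open>k < m\<close> \<open>k \<le> n\<close> in \<open>auto intro: minor_product_in_delta_plus_minors_ideal\<close>)
  then have "{a * b | a b. a \<in> minors_ideal k m k \<phi> \<and> b \<in> minors_ideal k k n \<phi>}
      \<subseteq> ideal_gen (insert (det_nat k \<phi>) (minors_ideal (Suc k) m n \<phi>))"
    by blast
  then show ?thesis
    using t by (simp add: ideal_gen_subset)
qed

end
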